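(* Let $L_1,L_2\subseteq\Sigma^*$ be regular languages with $L_1\subseteq\bigcup_{\alpha\in\Sigma^\kappa}\Sigma^*\alpha\Sigma^*\bar\alpha$ and $L_2\subseteq\bigcup_{\alpha\in\Sigma^\kappa}\alpha\Sigma^*\bar\alpha\Sigma^*$. Let $\lambda=\max\{\lambda_{L_1},\lambda_{L_2}\}$ and let $\eta=\lambda_{\mathcal{H}_\kappa(L_1,L_2)}$. Then: (i) $\sqrt{\lambda}\le\eta\le\lambda$. In particular, the growth of $\mathcal{H}_\kappa(L_1,L_2)$ is exponential (resp. polynomial, finite) if and only if the maximum growth of $L_1$ and $L_2$ is exponential (resp. polynomial, finite). (ii) If $\mathcal{H}_\kappa(L_1,L_2)$ is regular, then $\eta=\lambda$.
   Context: $\Sigma$ is a finite alphabet with at least two letters equipped with an involution $a\mapsto\bar a$ (a bijection with $\bar{\bar a}=a$), extended to words by $\overline{a_1\cdots a_m}=\bar a_m\cdots\bar a_1$. $\kappa$ is a fixed positive integer. The hairpin completion is $\mathcal{H}_\kappa(L_1,L_2)=\{\gamma\alpha\beta\bar\alpha\bar\gamma:\gamma,\alpha,\beta\in\Sigma^*,\ |\alpha|\ge\kappa,\ \gamma\alpha\beta\bar\alpha\in L_1\text{ or }\alpha\beta\bar\alpha\bar\gamma\in L_2\}$. For a language $L$, its growth indicator is $\lambda_L=\inf\{\lambda\in\mathbb{R}_{\ge0}:\exists c>0\ \forall m\in\mathbb{N}: |L\cap\Sigma^m|\le c\lambda^m\}$. The growth of $L$ is called exponential if $\lambda_L>1$,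 polynomial (sub-exponential but infinite) if $\lambda_L=1$, and finite if $\lambda_L=0$ (for regular and unambiguous linear languages these are the only possibilities). *)

theory Defs
  imports Complex_Main "HOL-Library.Cardinality"
begin

datatype 'a rexp = Zero | One | Atom 'a | Plus "'a rexp" "'a rexp" | Times "'a rexp" "'a rexp" | Star "'a rexp"

definition conc :: "'a list set \<Rightarrow> 'a list set \<Rightarrow> 'a list set" where
  "conc A B = {u @ v | u v. u \<in> A \<and> v \<in> B}"

inductive_set kstar :: "'a list set \<Rightarrow> 'a list set" for A where
  kstar_Nil: "[] \<in> kstar A"
| kstar_app: "u \<in> A \<Longrightarrow> v \<in> kstar A \<Longrightarrow> u @ v \<in> kstar A"

fun lang :: "'a rexp \<Rightarrow> 'a list set" where
  "lang Zero = {}"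
| "lang One = {[]}"
| "lang (Atom a) = {[a]}"
| "lang (Plus r s) = lang r \<union> lang s"
| "lang (Times r s) = conc (lang r) (lang s)"
| "lang (Star r) = kstar (lang r)"

definition regular :: "'a list set \<Rightarrow> bool" where
  "regular L \<longleftrightarrow> (\<exists>r. lang r = L)"

definition wbar :: "('a \<Rightarrow> 'a) \<Rightarrow> 'a list \<Rightarrow> 'a list" where
  "wbar bar w = rev (map bar w)"

definition hairpin :: "('a \<Rightarrow> 'a) \<Rightarrow> nat \<Rightarrow> 'a list set \<Rightarrow> 'a list set \<Rightarrow> 'a list set" where
  "hairpin bar \<kappa> L1 L2 =
     {\<gamma> @ \<alpha> @ \<beta> @ wbar bar \<alpha> @ wbar bar \<gamma> | \<gamma> \<alpha> \<beta>.
        length \<alpha> \<ge> \<kappa> \<and>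
        (\<gamma> @ \<alpha> @ \<beta> @ wbar bar \<alpha> \<in> L1 \<or> \<alpha> @ \<beta> @ wbar bar \<alpha> @ wbar bar \<gamma> \<in> L2)}"

definition growth :: "'a list set \<Rightarrow> real" where
  "growth L = Inf {l::real. l \<ge> 0 \<and>
      (\<exists>c>0. \<forall>m::nat. real (card {w \<in> L. length w = m}) \<le> c * l ^ m)}"

definition exp_growth :: "'a list set \<Rightarrow> bool" where
  "exp_growth L \<longleftrightarrow> growth L > 1"

definition poly_growth :: "'a list set \<Rightarrow> bool" where
  "poly_growth L \<longleftrightarrow> growth L = 1"

definition finite_growth :: "'a list set \<Rightarrow> bool" where
  "finite_growth L \<longleftrightarrow> growth L = 0"

end

(* Every word of L1 is a prefix, and every word of L2 a suffix, of a hairpin word at most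
   twice as long.  Conversely, a hairpin word of length m is determined by m and a word of L1
   or L2 of length at least m/2 from which it was completed.  Both correspondences are
   injective on words of equal length, so they compare the numbers of words of each length up
   to a linear change of length and a polynomial factor; this gives lambda <= eta^2 and
   eta <= lambda.  If the hairpin completion is regular, every prefix and every suffix of one
   of its words can be completed within a bounded number of letters (by induction on regular
   expressions, for suffixes after reversal), so the change of length is only additive and
   lambda <= eta. *)

theory Submission
  imports Defs "HOL-Library.Sublist"
begin

definition growth_bound :: "'a list set \<Rightarrow> real \<Rightarrow> bool" where
  "growth_bound L l \<longleftrightarrow> l \<ge> 0 \<and> (\<exists>c>0. \<forall>m. real (card {w \<in> L. length w = m}) \<le> c * l ^ m)"

lemma growth_eq_Inf: "growth L = Inf (Collect (growth_bound L))"
  by (simp add: growth_def growth_bound_def[abs_def])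

lemma finite_words_length_le: "finite {w :: 'a::finite list. length w \<le> n}"
  using finite_lists_length_le[of "UNIV :: 'a set" n] by simp

lemma growth_bound_card_UNIV: "growth_bound (L :: 'a::finite list set) CARD('a)"
proof -
  have "card {w \<in> L. length w = m} \<le> card {w :: 'a list. length w = m}" for m
    using finite_lists_length_eq[of "UNIV :: 'a set" m] by (intro card_mono) auto
  also have "card {w :: 'a list. length w = m} = CARD('a) ^ m" for m
    using card_lists_length_eq[of "UNIV :: 'a set" m] by simp
  finally have "real (card {w \<in> L. length w = m}) \<le> 1 * real CARD('a) ^ m" for m
    by (simp flip: of_nat_power)
  then show ?thesis unfolding growth_bound_def by (intro conjI exI[of _ 1]) auto
qed

lemma bdd_below_growth_bound: "bdd_below (Collect (growth_bound L))"
  by (auto simp: bdd_below_def growth_bound_def)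

lemma growth_nonneg: "0 \<le> growth (L :: 'a::finite list set)"
proof -
  have "Collect (growth_bound L) \<noteq> {}" using growth_bound_card_UNIV by blast
  then show ?thesis unfolding growth_eq_Inf by (intro cInf_greatest) (auto simp: growth_bound_def)
qed

lemma growth_le_if_growth_bound: "growth_bound L l \<Longrightarrow> growth L \<le> l"
  unfolding growth_eq_Inf by (rule cInf_lower[OF _ bdd_below_growth_bound]) simp

lemma growth_bound_mono: "growth_bound L l \<Longrightarrow> l \<le> l' \<Longrightarrow> growth_bound L l'"
proof -
  assume "growth_bound L l" "l \<le> l'"
  then obtain c where "c > 0" "l \<ge> 0" and c: "\<And>m. real (card {w \<in> L. length w = m}) \<le> c * l ^ m"
    unfolding growth_bound_def by blast
  have "c * l ^ m \<le> c * l' ^ m" for m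
    using \<open>c > 0\<close> \<open>l \<ge> 0\<close> \<open>l \<le> l'\<close> by (simp add: power_mono)
  then show ?thesis
    unfolding growth_bound_def using \<open>c > 0\<close> \<open>l \<ge> 0\<close> \<open>l \<le> l'\<close> c by (meson order.trans)
qed

lemma growth_bound_if_growth_less:
  assumes "growth (L :: 'a::finite list set) < l" shows "growth_bound L l"
proof -
  have "Inf (Collect (growth_bound L)) < l" using assms by (simp add: growth_eq_Inf)
  then obtain l' where "growth_bound L l'" "l' < l"
    using growth_bound_card_UNIV[of L] by (subst (asm) cInf_less_iff) (auto intro: bdd_below_growth_bound)
  then show ?thesis using growth_bound_mono by fastforce
qed

lemma growth_leI: "(\<And>y. x < y \<Longrightarrow> growth_bound L y) \<Longrightarrow> growth L \<le> x"
  by (rule dense_ge) (simp add: growth_le_if_growth_bound)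

lemma growth_finite:
  assumes "finite (L :: 'a::finite list set)" shows "growth L = 0"
proof (rule antisym[OF growth_leI growth_nonneg])
  fix y :: real assume "0 < y"
  obtain M where M: "\<And>w. w \<in> L \<Longrightarrow> length w \<le> M"
    using assms finite_nat_set_iff_bounded_le[of "length ` L"] by auto
  define \<mu> where "\<mu> = min 1 y"
  have \<mu>: "0 < \<mu>" "\<mu> \<le> 1" "\<mu> \<le> y" using \<open>0 < y\<close> by (auto simp: \<mu>_def)
  define c where "c = (card L + 1) / \<mu> ^ M"
  have "real (card {w \<in> L. length w = m}) \<le> c * y ^ m" for m
  proof (cases "m \<le> M")
    case True
    have "card {w \<in> L. length w = m} \<le> card L" using assms by (intro card_mono) auto
    moreover have "\<mu> ^ M \<le> y ^ m"
      using \<mu> True by (meson order.trans power_decreasing power_mono less_imp_le)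
    then have "1 \<le> y ^ m / \<mu> ^ M" using \<mu> by simp
    then have "real (card L + 1) * 1 \<le> real (card L + 1) * (y ^ m / \<mu> ^ M)"
      by (intro mult_left_mono) auto
    ultimately show ?thesis unfolding c_def by simp
  next
    case False
    then have "{w \<in> L. length w = m} = {}" using M by fastforce
    then have "card {w \<in> L. length w = m} = 0" by (simp only: card.empty)
    moreover have "0 \<le> c * y ^ m" using \<mu> \<open>0 < y\<close> by (simp add: c_def)
    ultimately show ?thesis by simp
  qed
  then show "growth_bound L y" unfolding growth_bound_def using \<mu> \<open>0 < y\<close>
    by (intro conjI exI[of _ c]) (auto simp: c_def)
qed

lemma finite_if_growth_less_1:
  assumes "growth (L :: 'a::finite list set) < 1" shows "finite L"
proof -
  define l where "l = (growth L + 1) / 2"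
  have "l < 1" "growth L < l" using assms by (simp_all add: l_def)
  then obtain c where "0 \<le> l" and c: "\<And>m. real (card {w \<in> L. length w = m}) \<le> c * l ^ m"
    using growth_bound_if_growth_less unfolding growth_bound_def by blast
  have "(\<lambda>m. c * l ^ m) \<longlonglongrightarrow> c * 0"
    using \<open>0 \<le> l\<close> \<open>l < 1\<close> by (intro tendsto_mult tendsto_const LIMSEQ_power_zero) simp
  then have "eventually (\<lambda>m. c * l ^ m < 1) sequentially"
    by (rule order_tendstoD(2)) simp
  then obtain M where M: "\<And>m. m \<ge> M \<Longrightarrow> c * l ^ m < 1"
    by (auto simp: eventually_sequentially)
  have no_long: "{w \<in> L. length w = m} = {}" if "m \<ge> M" for m
  proof -
    have "card {w \<in> L. length w = m} = 0" using c[of m] M[OF that] by linarith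
    moreover have "finite {w \<in> L. length w = m}"
      using finite_lists_length_eq[of "UNIV :: 'a set" m] by (auto intro: finite_subset)
    ultimately show ?thesis by simp
  qed
  have "L \<subseteq> {w. length w \<le> M}"
  proof
    fix w assume "w \<in> L"
    then show "w \<in> {w. length w \<le> M}" using no_long[of "length w"] by (cases "M \<le> length w") auto
  qed
  then show ?thesis using finite_words_length_le finite_subset by blast
qed

lemma linear_le_exponential:
  assumes "1 < (s :: real)" shows "\<exists>C>0. \<forall>n. real n + 1 \<le> C * s ^ n"
proof (intro exI conjI allI)
  define d where "d = s - 1"
  have "d > 0" using assms by (simp add: d_def)
  then show "0 < 1 + 1 / d" by (simp add: add_pos_pos)
  fix n
  have "real n + 1 \<le> (1 + 1 / d) * (1 + real n * d)"
    using \<open>d > 0\<close> by (simp add: field_simps)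
  also have "\<dots> \<le> (1 + 1 / d) * s ^ n"
    using Bernoulli_inequality[of d n] \<open>d > 0\<close> by (intro mult_left_mono) (simp_all add: d_def)
  finally show "real n + 1 \<le> (1 + 1 / d) * s ^ n" .
qed

lemma card_length_le_exponential_bound:
  assumes "growth (L :: 'a::finite list set) < y" "1 < y"
  shows "\<exists>c>0. \<forall>n. real (card {w \<in> L. length w \<le> n}) \<le> c * y ^ n"
proof -
  \<comment> \<open>With \<open>l \<ge> 1\<close> the cumulative count is at most \<open>(n + 1) c l\<^sup>n\<close>; the factor \<open>n + 1\<close> is absorbed by \<open>y / l > 1\<close>.\<close>
  define l where "l = max 1 ((growth L + y) / 2)"
  have l: "growth L < l" "1 \<le> l" "l < y" using assms by (auto simp: l_def less_max_iff_disj)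
  then obtain c where "c > 0" and c: "\<And>m. real (card {w \<in> L. length w = m}) \<le> c * l ^ m"
    using growth_bound_if_growth_less unfolding growth_bound_def by blast
  obtain C where "C > 0" and C: "\<And>n. real n + 1 \<le> C * (y / l) ^ n"
    using linear_le_exponential[of "y / l"] l by auto
  have "real (card {w \<in> L. length w \<le> n}) \<le> (C * c) * y ^ n" for n
  proof -
    have "{w \<in> L. length w \<le> n} = (\<Union>m\<in>{..n}. {w \<in> L. length w = m})" by auto
    then have "card {w \<in> L. length w \<le> n} \<le> (\<Sum>m\<le>n. card {w \<in> L. length w = m})"
      by (simp add: card_UN_le)
    then have "real (card {w \<in> L. length w \<le> n}) \<le> (\<Sum>m\<le>n. real (card {w \<in> L. length w = m}))"
      by (simp flip: of_nat_sum)
    also have "\<dots> \<le> (\<Sum>m\<le>n. c * l ^ n)"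
    proof (rule sum_mono)
      fix m assume "m \<in> {..n}"
      then have "c * l ^ m \<le> c * l ^ n" using l \<open>c > 0\<close> by (simp add: power_increasing)
      then show "real (card {w \<in> L. length w = m}) \<le> c * l ^ n" using c[of m] by linarith
    qed
    also have "\<dots> = (real n + 1) * (c * l ^ n)" by simp
    also have "\<dots> \<le> C * (y / l) ^ n * (c * l ^ n)"
      using C \<open>c > 0\<close> l by (intro mult_right_mono) auto
    also have "\<dots> = (C * c) * y ^ n"
      using l by (simp add: field_simps)
    finally show ?thesis .
  qed
  then show ?thesis using \<open>C > 0\<close> \<open>c > 0\<close> by (intro exI[of _ "C * c"]) auto
qed

lemma growth_Un_le: "growth (A \<union> B :: 'a::finite list set) \<le> max (growth A) (growth B)"
proof (rule growth_leI)
  fix y assume "max (growth A) (growth B) < y"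
  then obtain a b where "a > 0" "b > 0" "y \<ge> 0"
    and a: "\<And>m. real (card {w \<in> A. length w = m}) \<le> a * y ^ m"
    and b: "\<And>m. real (card {w \<in> B. length w = m}) \<le> b * y ^ m"
    using growth_bound_if_growth_less[of A y] growth_bound_if_growth_less[of B y]
    unfolding growth_bound_def by auto
  have "real (card {w \<in> A \<union> B. length w = m}) \<le> (a + b) * y ^ m" for m
  proof -
    have "{w \<in> A \<union> B. length w = m} = {w \<in> A. length w = m} \<union> {w \<in> B. length w = m}" by auto
    then have "card {w \<in> A \<union> B. length w = m} \<le> card {w \<in> A. length w = m} + card {w \<in> B. length w = m}"
      by (simp add: card_Un_le)
    then show ?thesis using a[of m] b[of m] by (simp add: distrib_right)
  qed
  then show "growth_bound (A \<union> B) y"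
    unfolding growth_bound_def using \<open>a > 0\<close> \<open>b > 0\<close> \<open>y \<ge> 0\<close> by (intro conjI exI[of _ "a + b"]) auto
qed

lemma exists_greater_power_less:
  fixes x y :: real
  assumes "x ^ k < y" shows "\<exists>l>x. l ^ k < y"
proof -
  have "\<forall>\<^sub>F l in at_right x. l ^ k < y"
    by (intro order_tendstoD(2)[OF _ assms] tendsto_intros)
  then have "\<forall>\<^sub>F l in at_right x. x < l \<and> l ^ k < y"
    by (intro eventually_conj eventually_at_right_less)
  then show ?thesis using eventually_happens'[OF trivial_limit_at_right_real] by blast
qed

lemma card_length_eq_le_if_embedding:
  assumes embed: "\<And>a. a \<in> A \<Longrightarrow> \<exists>b\<in>B. R a b \<and> length b \<le> f (length a)"
    and inj: "\<And>a a' b. R a b \<Longrightarrow> R a' b \<Longrightarrow> length a = length a' \<Longrightarrow> a = a'"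
    and fin: "finite {b \<in> B. length b \<le> f n}"
  shows "card {a \<in> A. length a = n} \<le> card {b \<in> B. length b \<le> f n}"
proof -
  obtain g where g: "\<And>a. a \<in> A \<Longrightarrow> g a \<in> B \<and> R a (g a) \<and> length (g a) \<le> f (length a)"
    using embed by metis
  have "inj_on g {a \<in> A. length a = n}"
    by (rule inj_onI) (metis (mono_tags, lifting) g inj mem_Collect_eq)
  moreover have "g ` {a \<in> A. length a = n} \<subseteq> {b \<in> B. length b \<le> f n}" using g by auto
  ultimately show ?thesis using fin by (rule card_inj_on_le)
qed

lemma growth_le_power_if_embedding:
  fixes A B :: "'a::finite list set"
  assumes embed: "\<And>a. a \<in> A \<Longrightarrow> \<exists>b\<in>B. R a b \<and> length a \<le> j * length b \<and> length b \<le> k * length a + N"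
    and inj: "\<And>a a' b. R a b \<Longrightarrow> R a' b \<Longrightarrow> length a = length a' \<Longrightarrow> a = a'"
  shows "growth A \<le> growth B ^ k"
proof (cases "growth B < 1")
  case True
  \<comment> \<open>Only here, for finite \<open>B\<close>, is the lower bound \<open>length a \<le> j * length b\<close> needed.\<close>
  then obtain M where M: "\<And>b. b \<in> B \<Longrightarrow> length b \<le> M"
    using finite_if_growth_less_1 finite_nat_set_iff_bounded_le[of "length ` B"] by auto
  have "A \<subseteq> {a. length a \<le> j * M}"
  proof
    fix a assume "a \<in> A"
    then obtain b where "b \<in> B" "length a \<le> j * length b" using embed by blast
    then show "a \<in> {a. length a \<le> j * M}" using M[of b] by (simp add: le_trans[OF _ mult_le_mono2])
  qed
  then have "growth A = 0" using finite_words_length_le by (blast intro: growth_finite finite_subset)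
  then show ?thesis using growth_nonneg[of B] by simp
next
  case False
  show ?thesis
  proof (rule growth_leI)
    fix y assume y: "growth B ^ k < y"
    then obtain l where l: "growth B < l" "l ^ k < y" using exists_greater_power_less by blast
    then obtain c where "c > 0" and c: "\<And>n. real (card {b \<in> B. length b \<le> n}) \<le> c * l ^ n"
      using card_length_le_exponential_bound[of B l] False by auto
    have "real (card {a \<in> A. length a = n}) \<le> (c * l ^ N) * y ^ n" for n
    proof -
      have "card {a \<in> A. length a = n} \<le> card {b \<in> B. length b \<le> k * n + N}"
      proof (rule card_length_eq_le_if_embedding[where R = R and f = "\<lambda>m. k * m + N"])
        show "\<exists>b\<in>B. R a b \<and> length b \<le> k * length a + N" if "a \<in> A" for a
          using embed[OF that] by blast
        show "finite {b \<in> B. length b \<le> k * n + N}"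
          by (rule finite_subset[OF _ finite_words_length_le]) auto
      qed (rule inj)
      then have "real (card {a \<in> A. length a = n}) \<le> c * l ^ (k * n + N)"
        using c by (meson of_nat_le_iff order.trans)
      also have "\<dots> = (c * l ^ N) * (l ^ k) ^ n" by (simp add: power_add power_mult mult.commute)
      also have "\<dots> \<le> (c * l ^ N) * y ^ n"
        using l False \<open>c > 0\<close> by (intro mult_left_mono power_mono) auto
      finally show ?thesis .
    qed
    moreover have "0 < c * l ^ N" using \<open>c > 0\<close> l False by auto
    moreover have "0 \<le> y" using y zero_le_power[OF growth_nonneg[of B], of k] by linarith
    ultimately show "growth_bound A y" unfolding growth_bound_def by blast
  qed
qed

definition bounded_prefix_completion :: "nat \<Rightarrow> 'a list set \<Rightarrow> bool" where
  "bounded_prefix_completion N L \<longleftrightarrow> (\<forall>u v. u @ v \<in> L \<longrightarrow> (\<exists>x. length x \<le> N \<and> u @ x \<in> L))"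

lemma bounded_prefix_completionI:
  "(\<And>u v. u @ v \<in> L \<Longrightarrow> \<exists>x. length x \<le> N \<and> u @ x \<in> L) \<Longrightarrow> bounded_prefix_completion N L"
  unfolding bounded_prefix_completion_def by blast

lemma bounded_prefix_completionE:
  assumes "bounded_prefix_completion N L" "u @ v \<in> L"
  obtains x where "length x \<le> N" "u @ x \<in> L"
  using assms unfolding bounded_prefix_completion_def by blast

lemma bounded_prefix_completion_mono:
  "bounded_prefix_completion N L \<Longrightarrow> N \<le> N' \<Longrightarrow> bounded_prefix_completion N' L"
  by (rule bounded_prefix_completionI) (metis bounded_prefix_completionE order.trans)

lemma bounded_prefix_completion_Un:
  "bounded_prefix_completion N A \<Longrightarrow> bounded_prefix_completion N B \<Longrightarrow>
   bounded_prefix_completion N (A \<union> B)"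
  by (rule bounded_prefix_completionI) (metis UnCI UnE bounded_prefix_completionE)

lemma concI: "a \<in> A \<Longrightarrow> b \<in> B \<Longrightarrow> a @ b \<in> conc A B"
  unfolding conc_def by blast

lemma bounded_prefix_completion_conc:
  assumes A: "bounded_prefix_completion N A" and B: "bounded_prefix_completion N B" and "b\<^sub>0 \<in> B"
  shows "bounded_prefix_completion (N + length b\<^sub>0) (conc A B)"
proof (rule bounded_prefix_completionI)
  fix u v assume "u @ v \<in> conc A B"
  then obtain a b where "a \<in> A" "b \<in> B" "u @ v = a @ b" by (auto simp: conc_def)
  then obtain s where "a = u @ s \<and> s @ b = v \<or> u = a @ s \<and> b = s @ v"
    by (auto simp: append_eq_append_conv2)
  then show "\<exists>x. length x \<le> N + length b\<^sub>0 \<and> u @ x \<in> conc A B"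
  proof
    assume "a = u @ s \<and> s @ b = v"
    then have "u @ s \<in> A" using \<open>a \<in> A\<close> by simp
    with A obtain x where "length x \<le> N" "u @ x \<in> A" by (rule bounded_prefix_completionE)
    then have "u @ (x @ b\<^sub>0) \<in> conc A B" using concI[OF _ \<open>b\<^sub>0 \<in> B\<close>] by fastforce
    then show ?thesis using \<open>length x \<le> N\<close> by (intro exI[of _ "x @ b\<^sub>0"]) simp
  next
    assume "u = a @ s \<and> b = s @ v"
    then have "s @ v \<in> B" using \<open>b \<in> B\<close> by simp
    with B obtain x where "length x \<le> N" "s @ x \<in> B" by (rule bounded_prefix_completionE)
    then have "u @ x \<in> conc A B" using concI[OF \<open>a \<in> A\<close>] \<open>u = a @ s \<and> b = s @ v\<close> by fastforce
    then show ?thesis using \<open>length x \<le> N\<close> by (intro exI[of _ x]) simp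
  qed
qed

lemma bounded_prefix_completion_kstar:
  assumes A: "bounded_prefix_completion N A"
  shows "bounded_prefix_completion N (kstar A)"
proof -
  have "\<exists>x. length x \<le> N \<and> u @ x \<in> kstar A" if "w \<in> kstar A" "w = u @ v" for w u v
    using that
  proof (induction arbitrary: u v rule: kstar.induct)
    case kstar_Nil
    then show ?case using kstar.kstar_Nil by (intro exI[of _ "[]"]) simp
  next
    case (kstar_app a w)
    then obtain s where "a = u @ s \<and> s @ w = v \<or> u = a @ s \<and> w = s @ v"
      by (auto simp: append_eq_append_conv2)
    then show ?case
    proof
      assume "a = u @ s \<and> s @ w = v"
      then have "u @ s \<in> A" using \<open>a \<in> A\<close> by simp
      with A obtain x where "length x \<le> N" "u @ x \<in> A" by (rule bounded_prefix_completionE)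
      then show ?thesis using kstar.kstar_app[of "u @ x" A "[]"] kstar.kstar_Nil by auto
    next
      assume "u = a @ s \<and> w = s @ v"
      then obtain x where "length x \<le> N" "s @ x \<in> kstar A" using kstar_app.IH by blast
      then show ?thesis using kstar.kstar_app[OF \<open>a \<in> A\<close>] \<open>u = a @ s \<and> w = s @ v\<close> by auto
    qed
  qed
  then show ?thesis by (intro bounded_prefix_completionI) blast
qed

lemma regular_bounded_prefix_completion:
  assumes "regular L" shows "\<exists>N. bounded_prefix_completion N L"
proof -
  have "\<exists>N. bounded_prefix_completion N (lang r)" for r :: "'a rexp"
  proof (induction r)
    case (Atom a)
    have "bounded_prefix_completion 1 {[a]}"
    proof (rule bounded_prefix_completionI)
      fix u v assume "u @ v \<in> {[a]}"
      then have "u = [] \<or> u = [a]" by (cases u) auto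
      then show "\<exists>x. length x \<le> 1 \<and> u @ x \<in> {[a]}" by auto
    qed
    then show ?case by auto
  next
    case (Plus r s)
    then obtain N M where "bounded_prefix_completion N (lang r)" "bounded_prefix_completion M (lang s)"
      by blast
    then have "bounded_prefix_completion (N + M) (lang r \<union> lang s)"
      by (intro bounded_prefix_completion_Un) (auto elim: bounded_prefix_completion_mono)
    then show ?case by auto
  next
    case (Times r s)
    then obtain N M where "bounded_prefix_completion N (lang r)" "bounded_prefix_completion M (lang s)"
      by blast
    then have N_M: "bounded_prefix_completion (N + M) (lang r)" "bounded_prefix_completion (N + M) (lang s)"
      by (auto elim: bounded_prefix_completion_mono)
    show ?case
    proof (cases "lang s = {}")
      case True
      then show ?thesis by (simp add: bounded_prefix_completion_def conc_def)
    next
      case False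
      then obtain b where "b \<in> lang s" by blast
      then show ?thesis using bounded_prefix_completion_conc[OF N_M] by auto
    qed
  next
    case (Star r)
    then show ?case by (auto intro: bounded_prefix_completion_kstar)
  qed (auto simp: bounded_prefix_completion_def)
  then show ?thesis using assms unfolding regular_def by blast
qed

lemma kstar_append: "u \<in> kstar A \<Longrightarrow> v \<in> kstar A \<Longrightarrow> u @ v \<in> kstar A"
  by (induction rule: kstar.induct) (auto intro: kstar.intros)

lemma rev_image_kstar_subset: "rev ` kstar A \<subseteq> kstar (rev ` A)"
proof
  fix w assume "w \<in> rev ` kstar A"
  then obtain u where "u \<in> kstar A" "w = rev u" by blast
  then show "w \<in> kstar (rev ` A)"
  proof (induction arbitrary: w rule: kstar.induct)
    case kstar_Nil
    then show ?case by (simp add: kstar.kstar_Nil)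
  next
    case (kstar_app a u)
    have "rev a @ [] \<in> kstar (rev ` A)"
      using kstar_app.hyps(1) by (intro kstar.kstar_app kstar.kstar_Nil) simp
    then show ?case using kstar_app by (simp add: kstar_append)
  qed
qed

lemma rev_image_kstar: "rev ` kstar A = kstar (rev ` A)"
proof
  have "kstar (rev ` A) = rev ` rev ` kstar (rev ` A)" by (simp add: image_image)
  also have "\<dots> \<subseteq> rev ` kstar (rev ` rev ` A)" by (intro image_mono rev_image_kstar_subset)
  finally show "kstar (rev ` A) \<subseteq> rev ` kstar A" by (simp add: image_image)
qed (rule rev_image_kstar_subset)

lemma rev_image_conc: "rev ` conc A B = conc (rev ` B) (rev ` A)"
proof (intro equalityI subsetI)
  fix w assume "w \<in> rev ` conc A B"
  then obtain a b where "a \<in> A" "b \<in> B" "w = rev b @ rev a" by (auto simp: conc_def)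
  then show "w \<in> conc (rev ` B) (rev ` A)" by (simp add: concI)
next
  fix w assume "w \<in> conc (rev ` B) (rev ` A)"
  then obtain a b where "a \<in> A" "b \<in> B" "w = rev (a @ b)" by (auto simp: conc_def)
  then show "w \<in> rev ` conc A B" using concI[of a A b B] by blast
qed

fun rexp_rev :: "'a rexp \<Rightarrow> 'a rexp" where
  "rexp_rev (Plus r s) = Plus (rexp_rev r) (rexp_rev s)"
| "rexp_rev (Times r s) = Times (rexp_rev s) (rexp_rev r)"
| "rexp_rev (Star r) = Star (rexp_rev r)"
| "rexp_rev r = r"

lemma lang_rexp_rev: "lang (rexp_rev r) = rev ` lang r"
  by (induction r) (simp_all add: image_Un rev_image_conc rev_image_kstar)

lemma regular_rev_image: "regular L \<Longrightarrow> regular (rev ` L)"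
  unfolding regular_def using lang_rexp_rev by blast

lemma regular_bounded_suffix_completion:
  assumes "regular L"
  shows "\<exists>N. \<forall>u v. u @ v \<in> L \<longrightarrow> (\<exists>x. length x \<le> N \<and> x @ v \<in> L)"
proof -
  obtain N where N: "bounded_prefix_completion N (rev ` L)"
    using regular_bounded_prefix_completion[OF regular_rev_image[OF assms]] by blast
  have "\<exists>x. length x \<le> N \<and> x @ v \<in> L" if "u @ v \<in> L" for u v
  proof -
    have "rev v @ rev u \<in> rev ` L" using that by (metis image_eqI rev_append)
    with N obtain x where "length x \<le> N" "rev v @ x \<in> rev ` L" by (rule bounded_prefix_completionE)
    moreover have "rev (rev v @ x) = rev x @ v" by simp
    ultimately show ?thesis by (intro exI[of _ "rev x"]) (auto simp del: rev_append)
  qed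
  then show ?thesis by blast
qed

lemma prefix_length_eq: "prefix w h \<Longrightarrow> prefix w' h \<Longrightarrow> length w = length w' \<Longrightarrow> w = w'"
  by (metis prefix_length_prefix prefix_order.antisym order_refl)

lemma suffix_length_eq: "suffix w h \<Longrightarrow> suffix w' h \<Longrightarrow> length w = length w' \<Longrightarrow> w = w'"
  by (metis suffix_length_suffix suffix_order.antisym order_refl)

lemma length_wbar [simp]: "length (wbar bar x) = length x"
  by (simp add: wbar_def)

lemma wbar_wbar: "(\<And>a. bar (bar a) = a) \<Longrightarrow> wbar bar (wbar bar x) = x"
  by (simp add: wbar_def rev_map comp_def)

lemma hairpin_Un: "hairpin bar \<kappa> L1 L2 = hairpin bar \<kappa> L1 {} \<union> hairpin bar \<kappa> {} L2"
  unfolding hairpin_def by auto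

lemma hairpin_if_left:
  "\<gamma> @ \<alpha> @ \<beta> @ wbar bar \<alpha> \<in> L1 \<Longrightarrow> \<kappa> \<le> length \<alpha> \<Longrightarrow>
   \<gamma> @ \<alpha> @ \<beta> @ wbar bar \<alpha> @ wbar bar \<gamma> \<in> hairpin bar \<kappa> L1 L2"
  unfolding hairpin_def by blast

lemma hairpin_if_right:
  "\<alpha> @ \<beta> @ wbar bar \<alpha> @ wbar bar \<gamma> \<in> L2 \<Longrightarrow> \<kappa> \<le> length \<alpha> \<Longrightarrow>
   \<gamma> @ \<alpha> @ \<beta> @ wbar bar \<alpha> @ wbar bar \<gamma> \<in> hairpin bar \<kappa> L1 L2"
  unfolding hairpin_def by blast

lemma prefix_hairpin_if_left:
  assumes "L1 \<subseteq> {x @ \<alpha> @ y @ wbar bar \<alpha> | x \<alpha> y. length \<alpha> = \<kappa>}" "w \<in> L1"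
  shows "\<exists>h\<in>hairpin bar \<kappa> L1 L2. prefix w h \<and> length h \<le> 2 * length w"
proof -
  obtain \<gamma> \<alpha> \<beta> where w: "w = \<gamma> @ \<alpha> @ \<beta> @ wbar bar \<alpha>" "length \<alpha> = \<kappa>" using assms by blast
  then have "w @ wbar bar \<gamma> \<in> hairpin bar \<kappa> L1 L2"
    using hairpin_if_left[of \<gamma> \<alpha> \<beta> bar L1] \<open>w \<in> L1\<close> by simp
  moreover have "length (w @ wbar bar \<gamma>) \<le> 2 * length w" using w by simp
  ultimately show ?thesis by (intro bexI[of _ "w @ wbar bar \<gamma>"]) auto
qed

lemma suffix_hairpin_if_right:
  assumes inv: "\<And>a. bar (bar a) = a"
    and "L2 \<subseteq> {\<alpha> @ y @ wbar bar \<alpha> @ x | x \<alpha> y. length \<alpha> = \<kappa>}" "w \<in> L2"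
  shows "\<exists>h\<in>hairpin bar \<kappa> L1 L2. suffix w h \<and> length h \<le> 2 * length w"
proof -
  obtain x \<alpha> \<beta> where w: "w = \<alpha> @ \<beta> @ wbar bar \<alpha> @ x" "length \<alpha> = \<kappa>"
    using assms(2,3) by blast
  define \<gamma> where "\<gamma> = wbar bar x"
  have "x = wbar bar \<gamma>" by (simp add: \<gamma>_def wbar_wbar[OF inv])
  then have "\<gamma> @ w \<in> hairpin bar \<kappa> L1 L2"
    using hairpin_if_right[of \<alpha> \<beta> bar \<gamma> L2] \<open>w \<in> L2\<close> w by simp
  moreover have "length (\<gamma> @ w) \<le> 2 * length w" using w by (simp add: \<gamma>_def)
  ultimately show ?thesis by (intro bexI[of _ "\<gamma> @ w"]) (auto simp: suffix_def)
qed

lemma hairpin_left_determined: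
  assumes "h \<in> hairpin bar \<kappa> L1 {}"
  shows "\<exists>w\<in>L1. h = w @ wbar bar (take (length h - length w) w) \<and>
    length h \<le> 2 * length w \<and> length w \<le> length h"
proof -
  obtain \<gamma> \<alpha> \<beta> where "\<gamma> @ \<alpha> @ \<beta> @ wbar bar \<alpha> \<in> L1"
    and h: "h = \<gamma> @ \<alpha> @ \<beta> @ wbar bar \<alpha> @ wbar bar \<gamma>"
    using assms unfolding hairpin_def by blast
  then show ?thesis by (intro bexI[of _ "\<gamma> @ \<alpha> @ \<beta> @ wbar bar \<alpha>"]) auto
qed

lemma hairpin_right_determined:
  assumes inv: "\<And>a. bar (bar a) = a" and "h \<in> hairpin bar \<kappa> {} L2"
  shows "\<exists>w\<in>L2. h = wbar bar (drop (2 * length w - length h) w) @ w \<and>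
    length h \<le> 2 * length w \<and> length w \<le> length h"
proof -
  obtain \<gamma> \<alpha> \<beta> where "\<alpha> @ \<beta> @ wbar bar \<alpha> @ wbar bar \<gamma> \<in> L2"
    and h: "h = \<gamma> @ \<alpha> @ \<beta> @ wbar bar \<alpha> @ wbar bar \<gamma>"
    using assms(2) unfolding hairpin_def by blast
  then show ?thesis
    by (intro bexI[of _ "\<alpha> @ \<beta> @ wbar bar \<alpha> @ wbar bar \<gamma>"]) (auto simp: wbar_wbar[OF inv])
qed

lemma growth_hairpin_left_le:
  fixes L1 :: "'a::finite list set"
  shows "growth (hairpin bar \<kappa> L1 {}) \<le> growth L1"
  by (rule growth_le_power_if_embedding[where j = 2 and k = 1 and N = 0
        and R = "\<lambda>h w. h = w @ wbar bar (take (length h - length w) w)", simplified])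
    (erule hairpin_left_determined)

lemma growth_hairpin_right_le:
  fixes L2 :: "'a::finite list set"
  assumes "\<And>a. bar (bar a) = a" shows "growth (hairpin bar \<kappa> {} L2) \<le> growth L2"
  by (rule growth_le_power_if_embedding[where j = 2 and k = 1 and N = 0
        and R = "\<lambda>h w. h = wbar bar (drop (2 * length w - length h) w) @ w", simplified])
    (erule hairpin_right_determined[OF assms])

lemma growth_hairpin_le:
  fixes L1 L2 :: "'a::finite list set"
  assumes "\<And>a. bar (bar a) = a"
  shows "growth (hairpin bar \<kappa> L1 L2) \<le> max (growth L1) (growth L2)"
proof -
  have "growth (hairpin bar \<kappa> L1 L2) \<le> max (growth (hairpin bar \<kappa> L1 {})) (growth (hairpin bar \<kappa> {} L2))"
    unfolding hairpin_Un[of bar \<kappa> L1 L2] by (rule growth_Un_le)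
  also have "\<dots> \<le> max (growth L1) (growth L2)"
    by (intro max.mono growth_hairpin_left_le growth_hairpin_right_le assms)
  finally show ?thesis .
qed

lemma growth_left_le_hairpin_sq:
  fixes L1 L2 :: "'a::finite list set"
  assumes "L1 \<subseteq> {x @ \<alpha> @ y @ wbar bar \<alpha> | x \<alpha> y. length \<alpha> = \<kappa>}"
  shows "growth L1 \<le> growth (hairpin bar \<kappa> L1 L2) ^ 2"
  by (rule growth_le_power_if_embedding[where R = prefix and j = 1 and N = 0, simplified])
    (use prefix_hairpin_if_left[OF assms] prefix_length_le in blast, rule prefix_length_eq)

lemma growth_right_le_hairpin_sq:
  fixes L1 L2 :: "'a::finite list set"
  assumes "\<And>a. bar (bar a) = a" "L2 \<subseteq> {\<alpha> @ y @ wbar bar \<alpha> @ x | x \<alpha> y. length \<alpha> = \<kappa>}"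
  shows "growth L2 \<le> growth (hairpin bar \<kappa> L1 L2) ^ 2"
  by (rule growth_le_power_if_embedding[where R = suffix and j = 1 and N = 0, simplified])
    (use suffix_hairpin_if_right[OF assms] suffix_length_le in blast, rule suffix_length_eq)

lemma growth_left_le_regular_hairpin:
  fixes L1 L2 :: "'a::finite list set"
  assumes "L1 \<subseteq> {x @ \<alpha> @ y @ wbar bar \<alpha> | x \<alpha> y. length \<alpha> = \<kappa>}"
    and "regular (hairpin bar \<kappa> L1 L2)"
  shows "growth L1 \<le> growth (hairpin bar \<kappa> L1 L2)"
proof -
  obtain N where N: "bounded_prefix_completion N (hairpin bar \<kappa> L1 L2)"
    using regular_bounded_prefix_completion[OF assms(2)] by blast
  have "\<exists>h\<in>hairpin bar \<kappa> L1 L2. prefix w h \<and> length w \<le> length h \<and> length h \<le> length w + N"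
    if w: "w \<in> L1" for w
  proof -
    obtain v where "w @ v \<in> hairpin bar \<kappa> L1 L2"
      using prefix_hairpin_if_left[OF assms(1) w] by (auto simp: prefix_def)
    with N obtain x where "length x \<le> N" "w @ x \<in> hairpin bar \<kappa> L1 L2"
      by (rule bounded_prefix_completionE)
    then show ?thesis by (intro bexI[of _ "w @ x"]) auto
  qed
  then have "growth L1 \<le> growth (hairpin bar \<kappa> L1 L2) ^ 1"
    by (intro growth_le_power_if_embedding[where R = prefix and j = 1 and N = N])
      (auto intro: prefix_length_eq)
  then show ?thesis by simp
qed

lemma growth_right_le_regular_hairpin:
  fixes L1 L2 :: "'a::finite list set"
  assumes "\<And>a. bar (bar a) = a" "L2 \<subseteq> {\<alpha> @ y @ wbar bar \<alpha> @ x | x \<alpha> y. length \<alpha> = \<kappa>}"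
    and "regular (hairpin bar \<kappa> L1 L2)"
  shows "growth L2 \<le> growth (hairpin bar \<kappa> L1 L2)"
proof -
  obtain N where N: "\<And>u v. u @ v \<in> hairpin bar \<kappa> L1 L2 \<Longrightarrow>
      \<exists>x. length x \<le> N \<and> x @ v \<in> hairpin bar \<kappa> L1 L2"
    using regular_bounded_suffix_completion[OF assms(3)] by blast
  have "\<exists>h\<in>hairpin bar \<kappa> L1 L2. suffix w h \<and> length w \<le> length h \<and> length h \<le> length w + N"
    if w: "w \<in> L2" for w
  proof -
    obtain u where "u @ w \<in> hairpin bar \<kappa> L1 L2"
      using suffix_hairpin_if_right[OF assms(1,2) w] by (auto simp: suffix_def)
    then obtain x where "length x \<le> N" "x @ w \<in> hairpin bar \<kappa> L1 L2" using N by blast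
    then show ?thesis by (intro bexI[of _ "x @ w"]) (auto simp: suffix_def)
  qed
  then have "growth L2 \<le> growth (hairpin bar \<kappa> L1 L2) ^ 1"
    by (intro growth_le_power_if_embedding[where R = suffix and j = 1 and N = N])
      (auto intro: suffix_length_eq)
  then show ?thesis by simp
qed

theorem theorem3:
  fixes bar :: "'a::finite \<Rightarrow> 'a" and \<kappa> :: nat and L1 L2 :: "'a list set"
  assumes alph: "CARD('a) \<ge> 2"
    and inv: "\<And>a. bar (bar a) = a"
    and kpos: "\<kappa> > 0"
    and reg1: "regular L1" and reg2: "regular L2"
    and sub1: "L1 \<subseteq> {x @ \<alpha> @ y @ wbar bar \<alpha> | x \<alpha> y. length \<alpha> = \<kappa>}"
    and sub2: "L2 \<subseteq> {\<alpha> @ y @ wbar bar \<alpha> @ x | x \<alpha> y. length \<alpha> = \<kappa>}"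
  defines "lam \<equiv> max (growth L1) (growth L2)"
    and "eta \<equiv> growth (hairpin bar \<kappa> L1 L2)"
  shows "(sqrt lam \<le> eta \<and> eta \<le> lam
          \<and> (exp_growth (hairpin bar \<kappa> L1 L2) \<longleftrightarrow> lam > 1)
          \<and> (poly_growth (hairpin bar \<kappa> L1 L2) \<longleftrightarrow> lam = 1)
          \<and> (finite_growth (hairpin bar \<kappa> L1 L2) \<longleftrightarrow> lam = 0))
         \<and> (regular (hairpin bar \<kappa> L1 L2) \<longrightarrow> eta = lam)"
proof -
  have "0 \<le> lam" "0 \<le> eta" unfolding lam_def eta_def using growth_nonneg by (auto simp: le_max_iff_disj)
  have upper: "eta \<le> lam" unfolding eta_def lam_def by (rule growth_hairpin_le[OF inv])
  have "lam \<le> eta\<^sup>2" unfolding lam_def eta_def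
    using growth_left_le_hairpin_sq[OF sub1] growth_right_le_hairpin_sq[OF inv sub2] by simp
  then have lower: "sqrt lam \<le> eta" using \<open>0 \<le> eta\<close> by (rule real_le_lsqrt[rotated])
  have "regular (hairpin bar \<kappa> L1 L2) \<Longrightarrow> lam \<le> eta"
    unfolding lam_def eta_def
    using growth_left_le_regular_hairpin[OF sub1] growth_right_le_regular_hairpin[OF inv sub2] by simp
  then have "regular (hairpin bar \<kappa> L1 L2) \<longrightarrow> eta = lam" using upper by auto
  moreover have "(1 < eta \<longleftrightarrow> 1 < lam) \<and> (eta = 1 \<longleftrightarrow> lam = 1) \<and> (eta = 0 \<longleftrightarrow> lam = 0)"
    using \<open>0 \<le> lam\<close> lower upper
    by (smt (verit) real_sqrt_ge_one real_sqrt_ge_zero real_sqrt_gt_1_iff real_sqrt_le_0_iff)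
  ultimately show ?thesis using lower upper
    unfolding exp_growth_def poly_growth_def finite_growth_def eta_def by auto
qed

end
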